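(* Let $\mathcal{H}$ be a separable complex Hilbert space with $\dim\mathcal{H}=\infty$, and let $A\in\mathcal{B}(\mathcal{H})$. Then there exist two orthonormal bases $(u_n)_{n\in\mathbb{N}}$ and $(v_n)_{n\in\mathbb{N}}$ of $\mathcal{H}$ such that, for every $N\in\mathbb{N}$, the $N\times N$ matrix $A_N$ with entries $(A_N)_{ij}=\langle v_i,Au_j\rangle$, $i,j\in\{1,\dots,N\}$, is singular.
   Context: $\mathcal{B}(\mathcal{H})$ denotes the space of bounded, everywhere defined linear operators on $\mathcal{H}$. The inner product $\langle\cdot,\cdot\rangle$ is antilinear in the first entry and linear in the second. *)

theory Defs
  imports Complex_Main "HOL-Library.Countable_Set" "Jordan_Normal_Form.Determinant"
begin

class complex_inner = ab_group_add +
  fixes scaleC :: "complex \<Rightarrow> 'a \<Rightarrow> 'a" (infixr "*\<^sub>C" 75)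
  fixes cinner :: "'a \<Rightarrow> 'a \<Rightarrow> complex"
  assumes scaleC_add_right: "a *\<^sub>C (x + y) = a *\<^sub>C x + a *\<^sub>C y"
    and scaleC_add_left: "(a + b) *\<^sub>C x = a *\<^sub>C x + b *\<^sub>C x"
    and scaleC_scaleC: "a *\<^sub>C (b *\<^sub>C x) = (a * b) *\<^sub>C x"
    and scaleC_one: "1 *\<^sub>C x = x"
    and cinner_add_right: "cinner x (y + z) = cinner x y + cinner x z"
    and cinner_scaleC_right: "cinner x (a *\<^sub>C y) = a * cinner x y"
    and cinner_commute: "cinner y x = cnj (cinner x y)"
    and cinner_ge_zero: "0 \<le> Re (cinner x x)"
    and cinner_eq_zero_iff: "cinner x x = 0 \<longleftrightarrow> x = 0"

definition cnorm :: "'a::complex_inner \<Rightarrow> real" where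
  "cnorm x = sqrt (Re (cinner x x))"

class chilbert_space = complex_inner +
  assumes cauchy_converges:
    "\<And>X :: nat \<Rightarrow> 'a. (\<forall>e>0. \<exists>M. \<forall>m\<ge>M. \<forall>n\<ge>M. sqrt (Re (cinner (X m - X n) (X m - X n))) < e)
       \<Longrightarrow> (\<exists>L. \<forall>e>0. \<exists>M. \<forall>n\<ge>M. sqrt (Re (cinner (X n - L) (X n - L))) < e)"

definition cspan :: "'a::complex_inner set \<Rightarrow> 'a set" where
  "cspan S = {\<Sum>s\<in>T. c s *\<^sub>C s | T c. finite T \<and> T \<subseteq> S}"

definition cfinite_dim :: "'a::complex_inner itself \<Rightarrow> bool" where
  "cfinite_dim _ \<longleftrightarrow> (\<exists>S::'a set. finite S \<and> cspan S = UNIV)"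

definition cseparable :: "'a::complex_inner itself \<Rightarrow> bool" where
  "cseparable _ \<longleftrightarrow> (\<exists>D::'a set. countable D \<and> (\<forall>x. \<forall>e>0. \<exists>d\<in>D. cnorm (x - d) < e))"

definition bounded_cop :: "('a::complex_inner \<Rightarrow> 'a) \<Rightarrow> bool" where
  "bounded_cop A \<longleftrightarrow>
     (\<forall>x y. A (x + y) = A x + A y) \<and> (\<forall>c x. A (c *\<^sub>C x) = c *\<^sub>C A x) \<and>
     (\<exists>K. \<forall>x. cnorm (A x) \<le> K * cnorm x)"

definition orthonormal_basis :: "(nat \<Rightarrow> 'a::complex_inner) \<Rightarrow> bool" where
  "orthonormal_basis u \<longleftrightarrow>
     (\<forall>i j. cinner (u i) (u j) = (if i = j then 1 else 0)) \<and>
     (\<forall>x. \<forall>e>0. \<exists>y\<in>cspan (range u). cnorm (x - y) < e)"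

end

theory Submission
  imports Defs
begin

text \<open>The bases are built two vectors at a time. Let \<open>d\<^sub>0, d\<^sub>1, \<dots>\<close> be dense. At stage \<open>k\<close>,
  \<open>u\<^sub>2\<^sub>k\<close> is chosen by Gram--Schmidt so that \<open>d\<^sub>k\<close> lies in the span of the \<open>u\<close>'s; then
  \<open>v\<^sub>2\<^sub>k\<close> is chosen orthogonal to the earlier \<open>v\<close>'s and to \<open>A u\<^sub>0, \<dots>, A u\<^sub>2\<^sub>k\<close>;
  \<open>v\<^sub>2\<^sub>k\<^sub>+\<^sub>1\<close> is chosen by Gram--Schmidt to capture \<open>d\<^sub>k\<close>; finally \<open>u\<^sub>2\<^sub>k\<^sub>+\<^sub>1\<close> is chosen
  orthogonal to the earlier \<open>u\<close>'s with \<open>A u\<^sub>2\<^sub>k\<^sub>+\<^sub>1\<close> orthogonal to \<open>v\<^sub>0, \<dots>, v\<^sub>2\<^sub>k\<^sub>+\<^sub>1\<close>.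
  The free choices are possible because in infinite dimension finitely many linear
  functionals always have a common zero of norm one. Then the last row of \<open>A\<^sub>2\<^sub>k\<^sub>+\<^sub>1\<close>
  and the last column of \<open>A\<^sub>2\<^sub>k\<^sub>+\<^sub>2\<close> vanish, so every section is singular.\<close>

lemma det_zero_row:
  fixes B :: "'b::comm_ring_1 mat"
  assumes B: "B \<in> carrier_mat n n" and k: "k < n" and zero: "\<And>j. j < n \<Longrightarrow> B $$ (k, j) = 0"
  shows "det B = 0"
proof -
  have "(\<Prod>i=0..<n. B $$ (i, p i)) = 0" if p: "p permutes {0..<n}" for p
  proof -
    have "p k < n" using p k by (metis atLeastLessThan_iff permutes_in_image zero_le)
    then show ?thesis by (intro prod_zero bexI[of _ k]) (use k zero in auto)
  qed
  then show ?thesis unfolding det_def'[OF B] by simp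
qed

lemma det_zero_col:
  fixes B :: "'b::comm_ring_1 mat"
  assumes B: "B \<in> carrier_mat n n" and k: "k < n" and zero: "\<And>i. i < n \<Longrightarrow> B $$ (i, k) = 0"
  shows "det B = 0"
proof -
  have "det B = det (transpose_mat B)" using det_transpose[OF B] by simp
  also have "\<dots> = 0" by (rule det_zero_row[of _ n k]) (use B k zero in auto)
  finally show ?thesis .
qed

lemma scaleC_zero_left[simp]: "(0::complex) *\<^sub>C (x::'a::complex_inner) = 0"
proof -
  have "(0::complex) *\<^sub>C x + 0 *\<^sub>C x = 0 *\<^sub>C x + 0"
    using scaleC_add_left[of 0 0 x] by simp
  then show ?thesis by simp
qed

lemma scaleC_zero_right[simp]: "a *\<^sub>C (0::'a::complex_inner) = 0"
proof -
  have "a *\<^sub>C (0::'a) + a *\<^sub>C 0 = a *\<^sub>C 0 + 0"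
    using scaleC_add_right[of a "0::'a" 0] by simp
  then show ?thesis by simp
qed

lemma cinner_zero_right[simp]: "cinner x (0::'a::complex_inner) = 0"
proof -
  have "cinner x (0::'a) + cinner x 0 = cinner x 0 + 0"
    using cinner_add_right[of x "0::'a" 0] by simp
  then show ?thesis by simp
qed

lemma cinner_scaleC_left: "cinner (a *\<^sub>C (x::'a::complex_inner)) y = cnj a * cinner x y"
  by (metis cinner_commute cinner_scaleC_right complex_cnj_cnj complex_cnj_mult)

lemma cinner_sum_right: "cinner x (\<Sum>i\<in>I. f i) = (\<Sum>i\<in>I. cinner (x::'a::complex_inner) (f i))"
  by (induction I rule: infinite_finite_induct) (auto simp: cinner_add_right)

lemma cinner_diff_right: "cinner x ((y::'a::complex_inner) - z) = cinner x y - cinner x z"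
  using cinner_add_right[of x "y - z" z] by (simp add: algebra_simps)

lemma cinner_eq_zero_sym: "cinner x (y::'a::complex_inner) = 0 \<longleftrightarrow> cinner y x = 0"
  by (metis cinner_commute complex_cnj_zero_iff)

lemma scaleC_sum_right: "a *\<^sub>C (\<Sum>i\<in>I. f i) = (\<Sum>i\<in>I. a *\<^sub>C (f i::'a::complex_inner))"
  by (induction I rule: infinite_finite_induct) (auto simp: scaleC_add_right)

lemma cinner_self_real: "cinner x (x::'a::complex_inner) = complex_of_real (Re (cinner x x))"
  by (metis cinner_commute Reals_cnj_iff complex_eq_iff of_real_Re Im_complex_of_real)

lemma exists_normalized_multiple:
  fixes x :: "'a::complex_inner"
  assumes "x \<noteq> 0"
  obtains c w where "cinner w w = 1" "w = c *\<^sub>C x" "x = inverse c *\<^sub>C w"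
proof -
  have pos: "Re (cinner x x) > 0"
    using assms cinner_ge_zero[of x] cinner_eq_zero_iff[of x] cinner_self_real[of x]
    by (metis less_eq_real_def of_real_0)
  define c where "c = complex_of_real (1 / sqrt (Re (cinner x x)))"
  have "c \<noteq> 0" using pos unfolding c_def by simp
  have "cinner (c *\<^sub>C x) (c *\<^sub>C x) = cnj c * c * cinner x x"
    by (simp add: cinner_scaleC_left cinner_scaleC_right)
  also have "\<dots> = 1"
    using pos by (subst cinner_self_real) (simp add: c_def flip: of_real_mult)
  finally show ?thesis
    using that[of "c *\<^sub>C x" c] \<open>c \<noteq> 0\<close> by (simp add: scaleC_scaleC scaleC_one)
qed

lemma cspan_zero: "0 \<in> cspan S"
  unfolding cspan_def by (rule CollectI, rule exI[of _ "{}"]) auto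

lemma cspan_base: "s \<in> S \<Longrightarrow> s \<in> cspan S"
  unfolding cspan_def
  by (rule CollectI, rule exI[of _ "{s}"], rule exI[of _ "\<lambda>_. 1"]) (auto simp: scaleC_one)

lemma cspan_mono: "S \<subseteq> S' \<Longrightarrow> cspan S \<subseteq> cspan S'"
  unfolding cspan_def by blast

lemma cspan_scale: "x \<in> cspan S \<Longrightarrow> a *\<^sub>C x \<in> cspan S"
proof -
  assume "x \<in> cspan S"
  then obtain T c where T: "finite T" "T \<subseteq> S" and x: "x = (\<Sum>s\<in>T. c s *\<^sub>C s)"
    unfolding cspan_def by blast
  have "a *\<^sub>C x = (\<Sum>s\<in>T. (a * c s) *\<^sub>C s)"
    unfolding x scaleC_sum_right by (simp add: scaleC_scaleC)
  then show ?thesis using T unfolding cspan_def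
    by (intro CollectI exI[of _ T] exI[of _ "\<lambda>s. a * c s"]) auto
qed

lemma cspan_add: "x \<in> cspan S \<Longrightarrow> y \<in> cspan S \<Longrightarrow> x + y \<in> cspan S"
proof -
  assume "x \<in> cspan S" "y \<in> cspan S"
  then obtain T1 c1 T2 c2 where T: "finite T1" "T1 \<subseteq> S" "finite T2" "T2 \<subseteq> S"
    and x: "x = (\<Sum>s\<in>T1. c1 s *\<^sub>C s)" and y: "y = (\<Sum>s\<in>T2. c2 s *\<^sub>C s)"
    unfolding cspan_def by blast
  define c where "c s = (if s \<in> T1 then c1 s else 0) + (if s \<in> T2 then c2 s else 0)" for s
  have fin: "finite (T1 \<union> T2)" using T by auto
  have "(\<Sum>s\<in>T1 \<union> T2. c s *\<^sub>C s) =
      (\<Sum>s\<in>T1 \<union> T2. if s \<in> T1 then c1 s *\<^sub>C s else 0)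
    + (\<Sum>s\<in>T1 \<union> T2. if s \<in> T2 then c2 s *\<^sub>C s else 0)"
    unfolding c_def scaleC_add_left sum.distrib[symmetric] by (intro sum.cong) auto
  also have "\<dots> = x + y"
    unfolding x y sum.inter_restrict[OF fin, symmetric] by (simp add: Int_absorb1)
  finally show ?thesis using T fin unfolding cspan_def
    by (intro CollectI exI[of _ "T1 \<union> T2"] exI[of _ c]) auto
qed

lemma cspan_sum: "(\<And>i. i \<in> I \<Longrightarrow> f i \<in> cspan S) \<Longrightarrow> sum f I \<in> cspan S"
  by (induction I rule: infinite_finite_induct) (auto simp: cspan_zero cspan_add)

definition clinear_functional :: "('a::complex_inner \<Rightarrow> complex) \<Rightarrow> bool" where
  "clinear_functional f \<longleftrightarrow> (\<forall>x y. f (x + y) = f x + f y) \<and> (\<forall>c x. f (c *\<^sub>C x) = c * f x)"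

lemma clinear_functional_cinner_right: "clinear_functional (\<lambda>x. cinner a x)"
  unfolding clinear_functional_def by (simp add: cinner_add_right cinner_scaleC_right)

lemma clinear_functional_cinner_comp:
  assumes "\<And>x y. A (x + y) = A x + A y" "\<And>c x. A (c *\<^sub>C x) = c *\<^sub>C A x"
  shows "clinear_functional (\<lambda>x. cinner a (A x))"
  using assms unfolding clinear_functional_def by (simp add: cinner_add_right cinner_scaleC_right)

text \<open>Each functional cuts the common kernel down by at most one dimension, which the
  induction records by adding one vector to the spanning set.\<close>

lemma common_kernel_not_in_finite_cspan:
  fixes F :: "('a::complex_inner \<Rightarrow> complex) set"
  assumes "finite F" "\<forall>f\<in>F. clinear_functional f" "\<not> cfinite_dim TYPE('a)" "finite S"
  shows "\<not> {x. \<forall>f\<in>F. f x = 0} \<subseteq> cspan S"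
  using assms(1,2,4)
proof (induction F arbitrary: S rule: finite_induct)
  case empty
  then show ?case using assms(3) unfolding cfinite_dim_def by auto
next
  case (insert g F)
  let ?K = "{x. \<forall>f\<in>F. f x = 0}"
  have lin: "\<forall>f\<in>F. clinear_functional f" "clinear_functional g" using insert.prems by auto
  show ?case
  proof
    assume sub: "{x. \<forall>f\<in>insert g F. f x = 0} \<subseteq> cspan S"
    show False
    proof (cases "\<exists>a\<in>?K. g a \<noteq> 0")
      case True
      then obtain a where a: "a \<in> ?K" "g a \<noteq> 0" by blast
      have "?K \<subseteq> cspan (insert a S)"
      proof
        fix y assume y: "y \<in> ?K"
        define t where "t = g y / g a"
        have shift: "f (y + (- t) *\<^sub>C a) = f y - t * f a" if "clinear_functional f" for f
          using that unfolding clinear_functional_def by simp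
        have "f (y + (- t) *\<^sub>C a) = 0" if "f \<in> insert g F" for f
        proof (cases "f = g")
          case True
          then show ?thesis using shift[OF lin(2)] a(2) unfolding t_def by simp
        next
          case False
          then have "clinear_functional f" "f a = 0" "f y = 0" using that lin(1) a(1) y by auto
          then show ?thesis by (simp add: shift)
        qed
        then have "y + (- t) *\<^sub>C a \<in> {x. \<forall>f\<in>insert g F. f x = 0}" by blast
        then have "y + (- t) *\<^sub>C a \<in> cspan (insert a S)"
          using sub cspan_mono[of S "insert a S"] by blast
        moreover have "t *\<^sub>C a \<in> cspan (insert a S)" by (intro cspan_scale cspan_base) simp
        ultimately have "(y + (- t) *\<^sub>C a) + t *\<^sub>C a \<in> cspan (insert a S)" by (rule cspan_add)
        then show "y \<in> cspan (insert a S)"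
          using scaleC_add_left[of "-t" t a] by (simp add: add.assoc)
      qed
      then show False using insert.IH lin \<open>finite S\<close> by blast
    next
      case False
      then have "?K \<subseteq> cspan S" using sub by auto
      then show False using insert.IH lin \<open>finite S\<close> by blast
    qed
  qed
qed

lemma exists_unit_in_common_kernel:
  fixes F :: "('a::complex_inner \<Rightarrow> complex) set"
  assumes "finite F" "\<forall>f\<in>F. clinear_functional f" "\<not> cfinite_dim TYPE('a)"
  shows "\<exists>w. cinner w w = 1 \<and> (\<forall>f\<in>F. f w = 0)"
proof -
  obtain x where x: "\<forall>f\<in>F. f x = 0" "x \<notin> cspan {}"
    using common_kernel_not_in_finite_cspan[OF assms finite.emptyI] by blast
  then have "x \<noteq> 0" using cspan_zero by auto
  then obtain c w where w: "cinner w w = 1" "w = c *\<^sub>C x"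
    by (rule exists_normalized_multiple)
  have "f w = 0" if "f \<in> F" for f
    using w(2) x(1) assms(2) that unfolding clinear_functional_def by (metis mult_zero_right)
  then show ?thesis using w(1) by blast
qed

definition orthonormal_upto :: "nat \<Rightarrow> (nat \<Rightarrow> 'a::complex_inner) \<Rightarrow> bool" where
  "orthonormal_upto n e \<longleftrightarrow> (\<forall>i<n. \<forall>j<n. cinner (e i) (e j) = (if i = j then 1 else 0))"

lemma orthonormal_upto_cong:
  "(\<And>i. i < n \<Longrightarrow> e i = e' i) \<Longrightarrow> orthonormal_upto n e = orthonormal_upto n e'"
  unfolding orthonormal_upto_def by auto

lemma orthonormal_upto_mono: "orthonormal_upto n e \<Longrightarrow> m \<le> n \<Longrightarrow> orthonormal_upto m e"
  unfolding orthonormal_upto_def by auto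

lemma orthonormal_upto_fun_upd:
  assumes "orthonormal_upto n e" "cinner w w = 1" "\<forall>i<n. cinner (e i) w = 0"
  shows "orthonormal_upto (Suc n) (e(n := w))"
proof -
  have "\<forall>i<n. cinner w (e i) = 0" using assms(3) by (metis cinner_eq_zero_sym)
  then show ?thesis using assms unfolding orthonormal_upto_def by (auto simp: less_Suc_eq)
qed

lemma image_fun_upd_lessThan_Suc: "(e(n := w)) ` {..<Suc n} = insert w (e ` {..<n})"
  by (auto simp: lessThan_Suc)

lemma orthonormal_upto_extend_in_common_kernel:
  fixes e :: "nat \<Rightarrow> 'a::complex_inner"
  assumes "orthonormal_upto n e" "finite F" "\<forall>f\<in>F. clinear_functional f"
    and "\<not> cfinite_dim TYPE('a)"
  shows "\<exists>w. orthonormal_upto (Suc n) (e(n := w)) \<and> (\<forall>f\<in>F. f w = 0)"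
proof -
  let ?G = "F \<union> (\<lambda>i x. cinner (e i) x) ` {..<n}"
  have G: "finite ?G" "\<forall>f\<in>?G. clinear_functional f"
    using assms clinear_functional_cinner_right by auto
  obtain w where w: "cinner w w = 1" "\<forall>f\<in>?G. f w = 0"
    using exists_unit_in_common_kernel[OF G assms(4)] by blast
  then have "orthonormal_upto (Suc n) (e(n := w))"
    using assms(1) by (intro orthonormal_upto_fun_upd) auto
  then show ?thesis using w by auto
qed

text \<open>Gram--Schmidt step: the new vector is the normalized component of \<open>d\<close> orthogonal to
  \<open>e\<^sub>0, \<dots>, e\<^sub>n\<^sub>-\<^sub>1\<close>, or arbitrary if that component vanishes.\<close>

lemma orthonormal_upto_extend_cspan:
  fixes e :: "nat \<Rightarrow> 'a::complex_inner"
  assumes "orthonormal_upto n e" "\<not> cfinite_dim TYPE('a)"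
  shows "\<exists>w. orthonormal_upto (Suc n) (e(n := w)) \<and> d \<in> cspan ((e(n := w)) ` {..<Suc n})"
proof -
  define p where "p = (\<Sum>i<n. cinner (e i) d *\<^sub>C e i)"
  have orth: "cinner (e j) (d - p) = 0" if j: "j < n" for j
  proof -
    have "cinner (e j) p = (\<Sum>i<n. cinner (e i) d * cinner (e j) (e i))"
      unfolding p_def cinner_sum_right by (simp add: cinner_scaleC_right)
    also have "\<dots> = (\<Sum>i<n. if j = i then cinner (e i) d else 0)"
      using assms(1) j unfolding orthonormal_upto_def by (intro sum.cong) auto
    also have "\<dots> = cinner (e j) d" using j by simp
    finally show ?thesis unfolding cinner_diff_right by simp
  qed
  have p: "p \<in> cspan (insert w (e ` {..<n}))" for w
    unfolding p_def by (intro cspan_sum cspan_scale cspan_base) auto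
  show ?thesis
  proof (cases "d = p")
    case True
    obtain w where "orthonormal_upto (Suc n) (e(n := w))"
      using orthonormal_upto_extend_in_common_kernel[OF assms(1) _ _ assms(2), of "{}"] by auto
    then show ?thesis using p True unfolding image_fun_upd_lessThan_Suc by blast
  next
    case False
    then have "d - p \<noteq> 0" by simp
    then obtain c w where w: "cinner w w = 1" "w = c *\<^sub>C (d - p)" "d - p = inverse c *\<^sub>C w"
      by (rule exists_normalized_multiple)
    have "\<forall>i<n. cinner (e i) w = 0" using w(2) orth by (simp add: cinner_scaleC_right)
    then have "orthonormal_upto (Suc n) (e(n := w))"
      using assms(1) w(1) by (intro orthonormal_upto_fun_upd)
    moreover have "d \<in> cspan (insert w (e ` {..<n}))"
    proof -
      have "p + inverse c *\<^sub>C w \<in> cspan (insert w (e ` {..<n}))"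
        by (intro cspan_add p cspan_scale cspan_base) simp
      then show ?thesis using w(3) by (metis add.commute diff_add_cancel)
    qed
    ultimately show ?thesis unfolding image_fun_upd_lessThan_Suc by blast
  qed
qed

text \<open>Block \<open>k\<close> consists of \<open>u\<^sub>2\<^sub>k, u\<^sub>2\<^sub>k\<^sub>+\<^sub>1, v\<^sub>2\<^sub>k, v\<^sub>2\<^sub>k\<^sub>+\<^sub>1\<close> (indices start at \<open>0\<close>); its orthogonality
  conditions say that the last row of \<open>A\<^sub>2\<^sub>k\<^sub>+\<^sub>1\<close> and the last column of \<open>A\<^sub>2\<^sub>k\<^sub>+\<^sub>2\<close> vanish.\<close>

definition singular_block ::
    "('a::complex_inner \<Rightarrow> 'a) \<Rightarrow> (nat \<Rightarrow> 'a) \<Rightarrow> nat \<Rightarrow> (nat \<Rightarrow> 'a) \<Rightarrow> (nat \<Rightarrow> 'a) \<Rightarrow> bool" where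
  "singular_block A d k u v \<longleftrightarrow>
     d k \<in> cspan (u ` {..<2*k+1}) \<and> d k \<in> cspan (v ` {..<2*k+2}) \<and>
     (\<forall>j\<le>2*k. cinner (v (2*k)) (A (u j)) = 0) \<and>
     (\<forall>i\<le>2*k+1. cinner (v i) (A (u (2*k+1))) = 0)"

definition singular_stage ::
    "('a::complex_inner \<Rightarrow> 'a) \<Rightarrow> (nat \<Rightarrow> 'a) \<Rightarrow> nat \<Rightarrow> (nat \<Rightarrow> 'a) \<Rightarrow> (nat \<Rightarrow> 'a) \<Rightarrow> bool" where
  "singular_stage A d m u v \<longleftrightarrow> orthonormal_upto (2*m) u \<and> orthonormal_upto (2*m) v \<and>
     (\<forall>k<m. singular_block A d k u v)"

lemma singular_stage_0: "singular_stage A d 0 u v"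
  unfolding singular_stage_def orthonormal_upto_def by simp

lemma singular_stage_Suc:
  "singular_stage A d (Suc m) u v \<longleftrightarrow> singular_stage A d m u v \<and>
     orthonormal_upto (2*m+2) u \<and> orthonormal_upto (2*m+2) v \<and> singular_block A d m u v"
  unfolding singular_stage_def by (auto simp: less_Suc_eq intro: orthonormal_upto_mono)

lemma singular_block_cong:
  assumes "\<And>i. i < 2*k+2 \<Longrightarrow> u' i = u i \<and> v' i = v i"
  shows "singular_block A d k u' v' \<longleftrightarrow> singular_block A d k u v"
proof -
  have agree: "u' j = u j" "v' j = v j" if "j \<le> 2*k+1" for j
    using that assms by auto
  have "u' ` {..<2*k+1} = u ` {..<2*k+1}" "v' ` {..<2*k+2} = v ` {..<2*k+2}"
    using agree by (auto intro!: image_cong)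
  then show ?thesis unfolding singular_block_def using agree by simp
qed

lemma singular_stage_cong:
  assumes "\<And>i. i < 2*m \<Longrightarrow> u' i = u i \<and> v' i = v i"
  shows "singular_stage A d m u' v' \<longleftrightarrow> singular_stage A d m u v"
proof -
  have "orthonormal_upto (2*m) u' = orthonormal_upto (2*m) u"
      "orthonormal_upto (2*m) v' = orthonormal_upto (2*m) v"
    using orthonormal_upto_cong[of "2*m" u' u] orthonormal_upto_cong[of "2*m" v' v] assms
    by simp_all
  moreover have "singular_block A d k u' v' \<longleftrightarrow> singular_block A d k u v" if "k < m" for k
    using that assms by (intro singular_block_cong) simp
  ultimately show ?thesis unfolding singular_stage_def by simp
qed

lemma singular_stage_extend:
  fixes A :: "'a::complex_inner \<Rightarrow> 'a"
  assumes A: "\<And>x y. A (x + y) = A x + A y" "\<And>c x. A (c *\<^sub>C x) = c *\<^sub>C A x"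
    and inf: "\<not> cfinite_dim TYPE('a)"
    and stage: "singular_stage A d m u v"
  shows "\<exists>u' v'. singular_stage A d (Suc m) u' v' \<and> (\<forall>i<2*m. u' i = u i \<and> v' i = v i)"
proof -
  define n where "n = 2*m"
  have u: "orthonormal_upto n u" and v: "orthonormal_upto n v"
    using stage unfolding singular_stage_def n_def by auto
  obtain a where a: "orthonormal_upto (Suc n) (u(n := a))" "d m \<in> cspan ((u(n := a)) ` {..<Suc n})"
    using orthonormal_upto_extend_cspan[OF u inf] by blast
  let ?F = "(\<lambda>j x. cinner (A ((u(n := a)) j)) x) ` {..n}"
  have "finite ?F" "\<forall>f\<in>?F. clinear_functional f"
    using clinear_functional_cinner_right by auto
  then obtain c where c: "orthonormal_upto (Suc n) (v(n := c))" "\<forall>f\<in>?F. f c = 0"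
    using orthonormal_upto_extend_in_common_kernel[OF v _ _ inf] by blast
  obtain e where e: "orthonormal_upto (Suc (Suc n)) (v(n := c, Suc n := e))"
    "d m \<in> cspan ((v(n := c, Suc n := e)) ` {..<Suc (Suc n)})"
    using orthonormal_upto_extend_cspan[OF c(1) inf] by blast
  let ?G = "(\<lambda>i x. cinner ((v(n := c, Suc n := e)) i) (A x)) ` {..Suc n}"
  have "finite ?G" "\<forall>f\<in>?G. clinear_functional f"
    using clinear_functional_cinner_comp[OF A] by auto
  then obtain b where b: "orthonormal_upto (Suc (Suc n)) (u(n := a, Suc n := b))"
    "\<forall>f\<in>?G. f b = 0"
    using orthonormal_upto_extend_in_common_kernel[OF a(1) _ _ inf] by blast
  define u' where "u' = u(n := a, Suc n := b)"
  define v' where "v' = v(n := c, Suc n := e)"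
  have agree: "\<forall>i<2*m. u' i = u i \<and> v' i = v i" unfolding u'_def v'_def n_def by simp
  have "singular_block A d m u' v'"
    unfolding singular_block_def
  proof (intro conjI allI impI)
    show "d m \<in> cspan (u' ` {..<2*m+1})"
      using a(2) unfolding u'_def n_def by (simp add: image_fun_upd_lessThan_Suc)
    show "d m \<in> cspan (v' ` {..<2*m+2})"
      using e(2) unfolding v'_def n_def by simp
    show "cinner (v' (2*m)) (A (u' j)) = 0" if "j \<le> 2*m" for j
    proof -
      have "cinner (A (u' j)) c = 0" using c(2) that unfolding u'_def n_def by auto
      moreover have "v' (2*m) = c" unfolding v'_def n_def by simp
      ultimately show ?thesis by (metis cinner_eq_zero_sym)
    qed
    show "cinner (v' i) (A (u' (2*m+1))) = 0" if "i \<le> 2*m+1" for i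
      using b(2) that unfolding u'_def v'_def n_def by auto
  qed
  moreover have "orthonormal_upto (2*m+2) u'" "orthonormal_upto (2*m+2) v'"
    using b(1) e(1) unfolding u'_def v'_def n_def by simp_all
  moreover have "singular_stage A d m u' v'"
    using stage singular_stage_cong[of m u' u v' v] agree by simp
  ultimately show ?thesis unfolding singular_stage_Suc using agree by blast
qed

lemma exists_limit_of_extensions:
  fixes P :: "nat \<Rightarrow> (nat \<Rightarrow> 'b) \<Rightarrow> bool" and len :: "nat \<Rightarrow> nat"
  assumes "mono len" and unbounded: "\<And>i. \<exists>m. i < len m" and "P 0 f\<^sub>0"
    and local: "\<And>m f g. (\<And>i. i < len m \<Longrightarrow> g i = f i) \<Longrightarrow> P m f \<Longrightarrow> P m g"
    and extend: "\<And>m f. P m f \<Longrightarrow> \<exists>g. P (Suc m) g \<and> (\<forall>i<len m. g i = f i)"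
  shows "\<exists>f. \<forall>m. P m f"
proof -
  obtain grow where grow: "\<And>m f. P m f \<Longrightarrow> P (Suc m) (grow m f) \<and> (\<forall>i<len m. grow m f i = f i)"
    using extend by metis
  define S where "S = rec_nat f\<^sub>0 grow"
  have S_Suc: "S (Suc m) = grow m (S m)" for m unfolding S_def by simp
  have P_S: "P m (S m)" for m
    by (induction m) (use \<open>P 0 f\<^sub>0\<close> grow in \<open>simp_all add: S_def\<close>)
  have S_agree: "S m' i = S m i" if "m \<le> m'" "i < len m" for m m' i
    using that(1)
  proof (induction m' rule: dec_induct)
    case (step q)
    have "i < len q" using \<open>m \<le> q\<close> \<open>i < len m\<close> \<open>mono len\<close> by (meson monoD order.strict_trans2)
    then show ?case using grow[OF P_S[of q]] step.IH by (simp add: S_Suc)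
  qed simp
  define f where "f i = S (SOME m. i < len m) i" for i
  have f: "f i = S m i" if "i < len m" for i m
  proof -
    let ?M = "SOME m. i < len m"
    have "i < len ?M" using unbounded by (rule someI_ex)
    then have "f i = S (max m ?M) i" unfolding f_def using S_agree[OF max.cobounded2] by simp
    also have "\<dots> = S m i" using S_agree[OF max.cobounded1 that] .
    finally show ?thesis .
  qed
  show ?thesis using local[OF f P_S] by blast
qed

lemma exists_singular_stages:
  fixes A :: "'a::complex_inner \<Rightarrow> 'a"
  assumes A: "\<And>x y. A (x + y) = A x + A y" "\<And>c x. A (c *\<^sub>C x) = c *\<^sub>C A x"
    and inf: "\<not> cfinite_dim TYPE('a)"
  shows "\<exists>u v. \<forall>m. singular_stage A d m u v"
proof -
  let ?P = "\<lambda>m w. singular_stage A d m (fst \<circ> w) (snd \<circ> w)"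
  have "\<exists>w. \<forall>m. ?P m w"
  proof (rule exists_limit_of_extensions[where len = "\<lambda>m. 2*m"])
    show "mono (\<lambda>m::nat. 2*m)" by (simp add: mono_def)
    show "\<exists>m. i < 2*m" for i :: nat by (intro exI[of _ "Suc i"]) simp
    show "?P 0 (\<lambda>_. (0, 0))" by (rule singular_stage_0)
    show "?P m w'" if "\<And>i. i < 2*m \<Longrightarrow> w' i = w i" "?P m w" for m w w'
      using that singular_stage_cong[of m "fst \<circ> w'" "fst \<circ> w" "snd \<circ> w'" "snd \<circ> w"] by simp
    show "\<exists>w'. ?P (Suc m) w' \<and> (\<forall>i<2*m. w' i = w i)" if stage: "?P m w" for m w
    proof -
      obtain u' v' where "singular_stage A d (Suc m) u' v'"
          "\<forall>i<2*m. u' i = fst (w i) \<and> v' i = snd (w i)"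
        using singular_stage_extend[OF A inf stage] by auto
      then show ?thesis
        by (intro exI[of _ "\<lambda>i. (u' i, v' i)"]) (auto simp: o_def prod_eq_iff)
    qed
  qed
  then show ?thesis by blast
qed

lemma orthonormal_basis_if_singular_stages:
  assumes stages: "\<And>m. singular_stage A d m u v"
    and dense: "\<And>x e. e > 0 \<Longrightarrow> \<exists>k. cnorm (x - d k) < e"
  shows "orthonormal_basis u" "orthonormal_basis v"
proof -
  have orthonormal: "orthonormal_upto (2*m) u" "orthonormal_upto (2*m) v" for m
    using stages unfolding singular_stage_def by auto
  have orth: "cinner (u i) (u j) = (if i = j then 1 else 0)"
      "cinner (v i) (v j) = (if i = j then 1 else 0)" for i j
  proof -
    have "i < 2 * Suc (max i j)" "j < 2 * Suc (max i j)" by auto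
    then show "cinner (u i) (u j) = (if i = j then 1 else 0)"
        "cinner (v i) (v j) = (if i = j then 1 else 0)"
      using orthonormal[of "Suc (max i j)"] unfolding orthonormal_upto_def by blast+
  qed
  have "d k \<in> cspan (u ` {..<2*k+1})" "d k \<in> cspan (v ` {..<2*k+2})" for k
    using stages[of "Suc k"] unfolding singular_stage_def singular_block_def by simp_all
  then have span: "d k \<in> cspan (range u)" "d k \<in> cspan (range v)" for k
    using cspan_mono[of "u ` {..<2*k+1}" "range u"] cspan_mono[of "v ` {..<2*k+2}" "range v"]
    by auto
  have approx: "\<exists>y\<in>cspan (range u). cnorm (x - y) < e" "\<exists>y\<in>cspan (range v). cnorm (x - y) < e"
    if "e > 0" for x e
    using dense[OF that, of x] span by blast+
  show "orthonormal_basis u" "orthonormal_basis v"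
    unfolding orthonormal_basis_def using orth approx by simp_all
qed

lemma det_section_eq_0_if_singular_stages:
  assumes stages: "\<And>m. singular_stage A d m u v" and "N \<ge> 1"
  shows "det (mat N N (\<lambda>(i, j). cinner (v i) (A (u j)))) = 0"
proof -
  have block: "singular_block A d k u v" for k
    using stages[of "Suc k"] unfolding singular_stage_def by simp
  consider k where "N = 2*k + 1" | k where "N = 2*k + 2"
  proof (cases "odd N")
    case True
    then show ?thesis using that(1) by (metis oddE)
  next
    case False
    then obtain k' where "N = 2*k'" by blast
    then show ?thesis using that(2)[of "k' - 1"] \<open>N \<ge> 1\<close> by simp
  qed
  then show ?thesis
  proof cases
    case 1
    then show ?thesis
      by (intro det_zero_row[of _ N "2*k"]) (use block[of k] in \<open>auto simp: singular_block_def\<close>)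
  next
    case 2
    then show ?thesis
      by (intro det_zero_col[of _ N "2*k+1"]) (use block[of k] in \<open>auto simp: singular_block_def\<close>)
  qed
qed

lemma cseparable_imp_dense_sequence:
  assumes "cseparable TYPE('a::complex_inner)"
  shows "\<exists>d::nat \<Rightarrow> 'a. \<forall>x e. e > 0 \<longrightarrow> (\<exists>k. cnorm (x - d k) < e)"
proof -
  obtain D :: "'a set" where D: "countable D" "\<And>x e. e > 0 \<Longrightarrow> \<exists>y\<in>D. cnorm (x - y) < e"
    using assms unfolding cseparable_def by blast
  have "D \<noteq> {}" using D(2)[of 1 0] by auto
  then have "D = range (from_nat_into D)" using D(1) by (simp add: range_from_nat_into)
  then show ?thesis using D(2) by (metis rangeE)
qed

theorem lemma2p1:
  fixes A :: "'a::chilbert_space \<Rightarrow> 'a"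
  assumes "cseparable TYPE('a)"
    and "\<not> cfinite_dim TYPE('a)"
    and "bounded_cop A"
  shows "\<exists>u v. orthonormal_basis u \<and> orthonormal_basis v \<and>
           (\<forall>N::nat. N \<ge> 1 \<longrightarrow>
              det (mat N N (\<lambda>(i, j). cinner (v i) (A (u j)))) = 0)"
proof -
  obtain d :: "nat \<Rightarrow> 'a" where dense: "\<And>x e. e > 0 \<Longrightarrow> \<exists>k. cnorm (x - d k) < e"
    using cseparable_imp_dense_sequence[OF assms(1)] by blast
  have linear: "\<And>x y. A (x + y) = A x + A y" "\<And>c x. A (c *\<^sub>C x) = c *\<^sub>C A x"
    using assms(3) unfolding bounded_cop_def by auto
  obtain u v where stages: "\<And>m. singular_stage A d m u v"
    using exists_singular_stages[OF linear assms(2)] by blast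
  show ?thesis
    using orthonormal_basis_if_singular_stages[OF stages dense]
      det_section_eq_0_if_singular_stages[OF stages] by blast
qed

end
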